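(* Fix a replacement rule $\{p_{(R,\alpha)}(\mathbf{x})\}_{(R,\alpha)}$ satisfying the Fixation Axiom and a mutational bias $\nu\in(0,1)$. Then for each state $\mathbf{x}\in\{0,1\}^G$, $\lim_{u\to0}\pi_{\mathrm{MSS}}(\mathbf{x})$ exists and $$\lim_{u\to0}\pi_{\mathrm{MSS}}(\mathbf{x})=\begin{cases}\dfrac{\nu b(\mathbf{a})\rho_A}{\nu b(\mathbf{a})\rho_A+(1-\nu)b(\mathbf{A})\rho_a} & \mathbf{x}=\mathbf{A},\\[3mm] \dfrac{(1-\nu)b(\mathbf{A})\rho_a}{\nu b(\mathbf{a})\rho_A+(1-\nu)b(\mathbf{A})\rho_a} & \mathbf{x}=\mathbf{a},\\[3mm] 0 & \mathbf{x}\notin\{\mathbf{a},\mathbf{A}\},\end{cases}$$ where $\rho_A,\rho_a$ are the fixation probabilities for this replacement rule at $u=0$.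
   Context: Setting. $G$ is a finite nonempty set of genetic sites, $n=|G|$. A state is $\mathbf{x}\in\{0,1\}^G$ ($x_g=1$: allele $A$ at site $g$; $0$: allele $a$). For $S\subseteq G$, $\mathbf{1}_S$ has $x_g=1$ iff $g\in S$; $\mathbf{a}=\mathbf{1}_\emptyset$, $\mathbf{A}=\mathbf{1}_G$. A replacement event is $(R,\alpha)$ with $R\subseteq G$, $\alpha:R\to G$; a replacement rule gives for each state a probability distribution $\{p_{(R,\alpha)}(\mathbf{x})\}$ over events. With mutation probability $u\in[0,1]$ and bias $\nu\in(0,1)$, the evolutionary Markov chain moves from $\mathbf{x}$: draw $(R,\alpha)$ with probability $p_{(R,\alpha)}(\mathbf{x})$; independently for $g\in R$, $x'_g=x_{\alpha(g)}$ w.p. $1-u$, $x'_g=1$ w.p. $u\nu$, $x'_g=0$ w.p. $u(1-\nu)$; $x'_g=x_g$ for $g\notin R$. $P^{(t)}_{\mathbf{x}\to\mathbf{y}}$ denotes $t$-step transition probabilities. Fixation Axiom: there exist $g\in G$, $m\ge1$, events $(R_k,\alpha_k)_{k=1}^m$ with $p_{(R_k,\alpha_k)}(\mathbf{x})>0$ for all $k,\mathbf{x}$, $g\in R_k$ for some $k$, and $\tilde\alpha_1\circ\cdots\circ\tilde\alpha_m(h)=g$ for all $h\in G$, where $\tilde\alpha_k$ equals $\alpha_k$ on $R_k$ and the identity elsewhere. Quantities: $e_{gh}(\mathbf{x})=\sum_{(R,\alpha):h\in R,\alpha(h)=g}p_{(R,\alpha)}(\mathbf{x})$, $b_g=\sum_h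 e_{gh}$, $d_g=\sum_h e_{hg}$, $b=\sum_gb_g$. At $u=0$, $\mathbf{a},\mathbf{A}$ are absorbing and absorption occurs a.s. Mutant appearance distributions: $\mu_A(\mathbf{1}_{\{g\}})=d_g(\mathbf{a})/b(\mathbf{a})$ (zero on other states), $\mu_a(\mathbf{1}_{G\setminus\{g\}})=d_g(\mathbf{A})/b(\mathbf{A})$ (zero elsewhere); $\rho_A=\sum_\mathbf{x}\mu_A(\mathbf{x})\lim_{t\to\infty}P^{(t)}_{\mathbf{x}\to\mathbf{A}}$, $\rho_a=\sum_\mathbf{x}\mu_a(\mathbf{x})\lim_{t\to\infty}P^{(t)}_{\mathbf{x}\to\mathbf{a}}$, both computed at $u=0$. For $u>0$ the chain has a unique stationary distribution $\pi_{\mathrm{MSS}}$ (mutation–selection stationary distribution). *)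

theory Defs
  imports Complex_Main
begin

text \<open>Sites are the elements of a finite (nonempty) type 'g; G = UNIV.
A state x in {0,1}^G is represented by the set of sites carrying allele A.
A replacement event (R, alpha) with alpha : R -> G is represented by a partial
map E :: 'g => 'g option with R = dom E and alpha g = the (E g).\<close>

type_synonym 'g state = "'g set"
type_synonym 'g event = "'g \<Rightarrow> 'g option"

definition replacement_rule :: "('g::finite state \<Rightarrow> 'g event \<Rightarrow> real) \<Rightarrow> bool" where
  "replacement_rule p \<longleftrightarrow> (\<forall>x E. 0 \<le> p x E) \<and> (\<forall>x. (\<Sum>E\<in>UNIV. p x E) = 1)"

definition ext_map :: "'g event \<Rightarrow> 'g \<Rightarrow> 'g" where
  "ext_map E h = (case E h of Some g \<Rightarrow> g | None \<Rightarrow> h)"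

definition fixation_axiom :: "('g::finite state \<Rightarrow> 'g event \<Rightarrow> real) \<Rightarrow> bool" where
  "fixation_axiom p \<longleftrightarrow> (\<exists>g Es. Es \<noteq> [] \<and>
      (\<forall>k<length Es. \<forall>x. 0 < p x (Es ! k)) \<and>
      (\<exists>k<length Es. g \<in> dom (Es ! k)) \<and>
      (\<forall>h. foldr (\<lambda>E f. ext_map E \<circ> f) Es id h = g))"

definition site_prob :: "real \<Rightarrow> real \<Rightarrow> bool \<Rightarrow> bool \<Rightarrow> real" where
  "site_prob u \<nu> parent new =
     (1 - u) * (if new = parent then 1 else 0) + (if new then u * \<nu> else u * (1 - \<nu>))"

definition trans_prob :: "('g::finite state \<Rightarrow> 'g event \<Rightarrow> real) \<Rightarrow> real \<Rightarrow> real \<Rightarrow> 'g state \<Rightarrow> 'g state \<Rightarrow> real" where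
  "trans_prob p u \<nu> x y = (\<Sum>E\<in>UNIV. p x E *
      (if (\<forall>g. E g = None \<longrightarrow> (g \<in> y \<longleftrightarrow> g \<in> x))
       then (\<Prod>g\<in>dom E. site_prob u \<nu> (the (E g) \<in> x) (g \<in> y)) else 0))"

fun trans_pow :: "('g::finite state \<Rightarrow> 'g event \<Rightarrow> real) \<Rightarrow> real \<Rightarrow> real \<Rightarrow> nat \<Rightarrow> 'g state \<Rightarrow> 'g state \<Rightarrow> real" where
  "trans_pow p u \<nu> 0 x y = (if x = y then 1 else 0)"
| "trans_pow p u \<nu> (Suc t) x y = (\<Sum>z\<in>UNIV. trans_pow p u \<nu> t x z * trans_prob p u \<nu> z y)"

definition stationary :: "('g::finite state \<Rightarrow> 'g event \<Rightarrow> real) \<Rightarrow> real \<Rightarrow> real \<Rightarrow> ('g state \<Rightarrow> real) \<Rightarrow> bool" where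
  "stationary p u \<nu> \<pi> \<longleftrightarrow> (\<forall>x. 0 \<le> \<pi> x) \<and> (\<Sum>x\<in>UNIV. \<pi> x) = 1 \<and>
      (\<forall>y. \<pi> y = (\<Sum>x\<in>UNIV. \<pi> x * trans_prob p u \<nu> x y))"

text \<open>Mutation-selection stationary distribution (unique for u > 0).\<close>
definition pi_MSS :: "('g::finite state \<Rightarrow> 'g event \<Rightarrow> real) \<Rightarrow> real \<Rightarrow> real \<Rightarrow> 'g state \<Rightarrow> real" where
  "pi_MSS p u \<nu> = (THE \<pi>. stationary p u \<nu> \<pi>)"

definition e_rate :: "('g::finite state \<Rightarrow> 'g event \<Rightarrow> real) \<Rightarrow> 'g state \<Rightarrow> 'g \<Rightarrow> 'g \<Rightarrow> real" where
  "e_rate p x g h = (\<Sum>E\<in>{E. E h = Some g}. p x E)"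

definition b_site :: "('g::finite state \<Rightarrow> 'g event \<Rightarrow> real) \<Rightarrow> 'g state \<Rightarrow> 'g \<Rightarrow> real" where
  "b_site p x g = (\<Sum>h\<in>UNIV. e_rate p x g h)"

definition d_site :: "('g::finite state \<Rightarrow> 'g event \<Rightarrow> real) \<Rightarrow> 'g state \<Rightarrow> 'g \<Rightarrow> real" where
  "d_site p x g = (\<Sum>h\<in>UNIV. e_rate p x h g)"

definition b_total :: "('g::finite state \<Rightarrow> 'g event \<Rightarrow> real) \<Rightarrow> 'g state \<Rightarrow> real" where
  "b_total p x = (\<Sum>g\<in>UNIV. b_site p x g)"

text \<open>Absorption probabilities at u = 0 (they do not depend on nu at u = 0).\<close>
definition absorb :: "('g::finite state \<Rightarrow> 'g event \<Rightarrow> real) \<Rightarrow> real \<Rightarrow> 'g state \<Rightarrow> 'g state \<Rightarrow> real" where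
  "absorb p \<nu> x y = lim (\<lambda>t. trans_pow p 0 \<nu> t x y)"

definition rho_A :: "('g::finite state \<Rightarrow> 'g event \<Rightarrow> real) \<Rightarrow> real \<Rightarrow> real" where
  "rho_A p \<nu> = (\<Sum>g\<in>UNIV. d_site p {} g / b_total p {} * absorb p \<nu> {g} UNIV)"

definition rho_a :: "('g::finite state \<Rightarrow> 'g event \<Rightarrow> real) \<Rightarrow> real \<Rightarrow> real" where
  "rho_a p \<nu> = (\<Sum>g\<in>UNIV. d_site p UNIV g / b_total p UNIV * absorb p \<nu> (UNIV - {g}) {})"

end

theory Submission
  imports Defs "HOL-Analysis.Analysis"
begin

text \<open>
  For \<open>u > 0\<close> the state \<open>a\<close> is reached from every state within a fixed number of steps with
  probability bounded below: the events of the fixation axiom overwrite every site, and each copy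
  may mutate to \<open>a\<close>. Hence \<open>\<pi>\<^sub>M\<^sub>S\<^sub>S\<close> is well defined. As \<open>u \<rightarrow> 0\<close> the kernel \<open>P\<^sub>u\<close> tends to
  the mutation-free kernel \<open>P\<^sub>0\<close>, under which \<open>a\<close> and \<open>A\<close> are absorbing and are reached at a
  geometric rate, so \<open>\<pi>\<^sub>M\<^sub>S\<^sub>S\<close> puts vanishing mass on the other states.

  The split between \<open>a\<close> and \<open>A\<close> comes from testing stationarity against the fixation
  probability \<open>\<phi>\<close> of \<open>A\<close> under \<open>P\<^sub>0\<close>. Since \<open>\<phi>\<close> is \<open>P\<^sub>0\<close>-harmonic,
  \<open>\<Sum>\<^sub>x \<pi>\<^sub>M\<^sub>S\<^sub>S(x) ((P\<^sub>u - P\<^sub>0) \<phi>)(x) = 0\<close>. After division by \<open>u\<close>, only single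
  mutations out of \<open>a\<close> and \<open>A\<close> survive the limit, and they contribute
  \<open>\<nu> b(a) \<rho>\<^sub>A \<pi>(a)\<close> and \<open>-(1 - \<nu>) b(A) \<rho>\<^sub>a \<pi>(A)\<close>.
\<close>

lemma eventually_at_right_0_le_1: "eventually (\<lambda>u. 0 < u \<and> u \<le> (1::real)) (at_right 0)"
  by (auto simp: eventually_at_right_field intro!: exI[of _ 1])

lemma tendsto_bounded_mult_0:
  fixes a b :: "'a \<Rightarrow> real"
  assumes "eventually (\<lambda>u. \<bar>a u\<bar> \<le> B) F" and "(b \<longlongrightarrow> 0) F"
  shows "((\<lambda>u. a u * b u) \<longlongrightarrow> 0) F"
proof (rule tendsto_0_le[OF assms(2), where K=B])
  show "eventually (\<lambda>u. norm (a u * b u) \<le> norm (b u) * B) F"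
    using assms(1) by eventually_elim (simp add: abs_mult mult.commute mult_right_mono)
qed

lemma tendsto_balance:
  fixes a b :: "'a \<Rightarrow> real"
  assumes "((\<lambda>u. a u + b u) \<longlongrightarrow> 1) F" and "((\<lambda>u. \<alpha> * a u - \<beta> * b u) \<longlongrightarrow> 0) F"
    and "\<alpha> + \<beta> \<noteq> 0"
  shows "(a \<longlongrightarrow> \<beta> / (\<alpha> + \<beta>)) F" and "(b \<longlongrightarrow> \<alpha> / (\<alpha> + \<beta>)) F"
proof -
  have "((\<lambda>u. (\<beta> * (a u + b u) + (\<alpha> * a u - \<beta> * b u)) / (\<alpha> + \<beta>)) \<longlongrightarrow> (\<beta> * 1 + 0) / (\<alpha> + \<beta>)) F"
    and "((\<lambda>u. (\<alpha> * (a u + b u) - (\<alpha> * a u - \<beta> * b u)) / (\<alpha> + \<beta>)) \<longlongrightarrow> (\<alpha> * 1 - 0) / (\<alpha> + \<beta>)) F"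
    by (rule tendsto_divide[OF tendsto_add[OF tendsto_mult[OF tendsto_const assms(1)] assms(2)] tendsto_const assms(3)],
        rule tendsto_divide[OF tendsto_diff[OF tendsto_mult[OF tendsto_const assms(1)] assms(2)] tendsto_const assms(3)])
  moreover have "(\<beta> * (a u + b u) + (\<alpha> * a u - \<beta> * b u)) / (\<alpha> + \<beta>) = a u"
    and "(\<alpha> * (a u + b u) - (\<alpha> * a u - \<beta> * b u)) / (\<alpha> + \<beta>) = b u" for u
    using assms(3) by (simp_all add: field_simps)
  ultimately show "(a \<longlongrightarrow> \<beta> / (\<alpha> + \<beta>)) F" and "(b \<longlongrightarrow> \<alpha> / (\<alpha> + \<beta>)) F"
    by simp_all
qed

section \<open>Finite stochastic matrices\<close>

fun kernel_pow :: "('s::finite \<Rightarrow> 's \<Rightarrow> real) \<Rightarrow> nat \<Rightarrow> 's \<Rightarrow> 's \<Rightarrow> real" where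
  "kernel_pow K 0 x y = (if x = y then 1 else 0)"
| "kernel_pow K (Suc t) x y = (\<Sum>z\<in>UNIV. kernel_pow K t x z * K z y)"

definition stationary_dist :: "('s::finite \<Rightarrow> 's \<Rightarrow> real) \<Rightarrow> ('s \<Rightarrow> real) \<Rightarrow> bool" where
  "stationary_dist K \<pi> \<longleftrightarrow> (\<forall>x. 0 \<le> \<pi> x) \<and> (\<Sum>x\<in>UNIV. \<pi> x) = 1 \<and>
     (\<forall>y. \<pi> y = (\<Sum>x\<in>UNIV. \<pi> x * K x y))"

definition absorption_prob :: "('s::finite \<Rightarrow> 's \<Rightarrow> real) \<Rightarrow> 's \<Rightarrow> 's \<Rightarrow> real" where
  "absorption_prob K x a = lim (\<lambda>t. kernel_pow K t x a)"

lemma kernel_pow_1: "kernel_pow K 1 x y = K x y"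
proof -
  have "kernel_pow K 1 x y = (\<Sum>z\<in>UNIV. (if x = z then 1 else 0) * K z y)" by simp
  also have "\<dots> = (\<Sum>z\<in>UNIV. if z = x then K z y else 0)" by (intro sum.cong) auto
  finally show ?thesis by simp
qed

lemma kernel_pow_add:
  "kernel_pow K (s + t) x y = (\<Sum>z\<in>UNIV. kernel_pow K s x z * kernel_pow K t z y)"
proof (induction t arbitrary: y)
  case 0
  have "(\<Sum>z\<in>UNIV. kernel_pow K s x z * kernel_pow K 0 z y) = (\<Sum>z\<in>UNIV. if z = y then kernel_pow K s x z else 0)"
    by (intro sum.cong) auto
  then show ?case by simp
next
  case (Suc t)
  have "kernel_pow K (s + Suc t) x y = (\<Sum>w\<in>UNIV. (\<Sum>z\<in>UNIV. kernel_pow K s x z * kernel_pow K t z w) * K w y)"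
    by (simp add: Suc)
  also have "\<dots> = (\<Sum>z\<in>UNIV. kernel_pow K s x z * (\<Sum>w\<in>UNIV. kernel_pow K t z w * K w y))"
    by (simp add: sum_distrib_left sum_distrib_right mult.assoc) (rule sum.swap)
  finally show ?case by simp
qed

lemma kernel_pow_Suc_left: "kernel_pow K (Suc t) x y = (\<Sum>z\<in>UNIV. K x z * kernel_pow K t z y)"
  using kernel_pow_add[of K 1 t x y] by (simp only: kernel_pow_1 plus_1_eq_Suc)

lemma invariant_kernel_pow:
  assumes "\<And>y. w y = (\<Sum>x\<in>UNIV. w x * K x y)"
  shows "w y = (\<Sum>x\<in>UNIV. w x * kernel_pow K t x y)"
proof (induction t arbitrary: y)
  case 0
  have "(\<Sum>x\<in>UNIV. w x * kernel_pow K 0 x y) = (\<Sum>x\<in>UNIV. if x = y then w x else 0)"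
    by (intro sum.cong) auto
  then show ?case by simp
next
  case (Suc t)
  have "w y = (\<Sum>z\<in>UNIV. (\<Sum>x\<in>UNIV. w x * kernel_pow K t x z) * K z y)"
    by (subst assms) (simp flip: Suc.IH)
  also have "\<dots> = (\<Sum>x\<in>UNIV. w x * kernel_pow K (Suc t) x y)"
    by (simp add: sum_distrib_left sum_distrib_right mult.assoc) (rule sum.swap)
  finally show ?case .
qed

lemma kernel_pow_tendsto:
  fixes K :: "'b \<Rightarrow> 's::finite \<Rightarrow> 's \<Rightarrow> real"
  assumes "\<And>x y. ((\<lambda>u. K u x y) \<longlongrightarrow> K0 x y) F"
  shows "((\<lambda>u. kernel_pow (K u) t x y) \<longlongrightarrow> kernel_pow K0 t x y) F"
  by (induction t arbitrary: y) (auto intro!: tendsto_intros assms)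

lemma stationary_dist_mass_le:
  assumes "stationary_dist K \<pi>" and "\<And>x. (\<Sum>y\<in>A. kernel_pow K t x y) \<le> d"
  shows "(\<Sum>y\<in>A. \<pi> y) \<le> d"
proof -
  have \<pi>_nonneg: "0 \<le> \<pi> x" and \<pi>_sum: "(\<Sum>x\<in>UNIV. \<pi> x) = 1"
    and \<pi>_inv: "\<pi> y = (\<Sum>x\<in>UNIV. \<pi> x * K x y)" for x y
    using assms(1) unfolding stationary_dist_def by blast+
  have "(\<Sum>y\<in>A. \<pi> y) = (\<Sum>y\<in>A. \<Sum>x\<in>UNIV. \<pi> x * kernel_pow K t x y)"
    by (intro sum.cong refl invariant_kernel_pow \<pi>_inv)
  also have "\<dots> = (\<Sum>x\<in>UNIV. \<pi> x * (\<Sum>y\<in>A. kernel_pow K t x y))"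
    by (subst sum.swap) (simp add: sum_distrib_left)
  also have "\<dots> \<le> (\<Sum>x\<in>UNIV. \<pi> x * d)"
    by (intro sum_mono mult_left_mono assms(2) \<pi>_nonneg)
  also have "\<dots> = (\<Sum>x\<in>UNIV. \<pi> x) * d"
    by (rule sum_distrib_right[symmetric])
  finally show ?thesis by (simp add: \<pi>_sum)
qed

lemma stationary_dist_le_1:
  assumes "stationary_dist K \<pi>"
  shows "\<pi> x \<le> 1"
proof -
  have "0 \<le> \<pi> y" "(\<Sum>y\<in>UNIV. \<pi> y) = 1" for y
    using assms unfolding stationary_dist_def by blast+
  then show ?thesis using member_le_sum[of x UNIV \<pi>] by simp
qed

lemma stationary_pairing_harmonic:
  fixes K K0 :: "'s::finite \<Rightarrow> 's \<Rightarrow> real"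
  assumes "\<And>y. \<pi> y = (\<Sum>x\<in>UNIV. \<pi> x * K x y)" and "\<And>x. \<phi> x = (\<Sum>y\<in>UNIV. K0 x y * \<phi> y)"
  shows "(\<Sum>x\<in>UNIV. \<pi> x * (\<Sum>y\<in>UNIV. (K x y - K0 x y) * \<phi> y)) = 0"
proof -
  have "(\<Sum>x\<in>UNIV. \<pi> x * (\<Sum>y\<in>UNIV. K x y * \<phi> y)) = (\<Sum>y\<in>UNIV. (\<Sum>x\<in>UNIV. \<pi> x * K x y) * \<phi> y)"
    by (simp add: sum_distrib_left sum_distrib_right mult.assoc) (rule sum.swap)
  also have "\<dots> = (\<Sum>x\<in>UNIV. \<pi> x * (\<Sum>y\<in>UNIV. K0 x y * \<phi> y))"
    by (simp flip: assms)
  finally show ?thesis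
    by (simp add: left_diff_distrib right_diff_distrib sum_subtractf)
qed

locale stochastic_matrix =
  fixes K :: "'s::finite \<Rightarrow> 's \<Rightarrow> real"
  assumes nonneg: "0 \<le> K x y" and row_sum: "(\<Sum>y\<in>UNIV. K x y) = 1"
begin

lemma le_1: "K x y \<le> 1"
  using member_le_sum[of y UNIV "K x"] nonneg row_sum by simp

lemma stochastic_matrix_kernel_pow: "stochastic_matrix (kernel_pow K t)"
proof
  show "0 \<le> kernel_pow K t x y" for x y
    by (induction t arbitrary: y) (auto intro!: sum_nonneg mult_nonneg_nonneg nonneg)
  show "(\<Sum>y\<in>UNIV. kernel_pow K t x y) = 1" for x
  proof (induction t)
    case (Suc t)
    have "(\<Sum>y\<in>UNIV. kernel_pow K (Suc t) x y) = (\<Sum>z\<in>UNIV. kernel_pow K t x z * (\<Sum>y\<in>UNIV. K z y))"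
      by (simp add: sum_distrib_left) (rule sum.swap)
    then show ?case by (simp add: row_sum Suc)
  qed simp
qed

lemma kernel_pow_nonneg: "0 \<le> kernel_pow K t x y"
  and kernel_pow_le_1: "kernel_pow K t x y \<le> 1"
  and kernel_pow_row_sum: "(\<Sum>y\<in>UNIV. kernel_pow K t x y) = 1"
  using stochastic_matrix.nonneg stochastic_matrix.le_1 stochastic_matrix.row_sum
    stochastic_matrix_kernel_pow by blast+

lemma kernel_pow_sum_le_1: "(\<Sum>y\<in>A. kernel_pow K t x y) \<le> 1"
proof -
  have "(\<Sum>y\<in>A. kernel_pow K t x y) \<le> (\<Sum>y\<in>UNIV. kernel_pow K t x y)"
    by (intro sum_mono2) (auto simp: kernel_pow_nonneg)
  then show ?thesis by (simp only: kernel_pow_row_sum)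
qed

lemma kernel_pow_ge_path:
  assumes "0 \<le> c" and "\<And>f x. f \<in> set fs \<Longrightarrow> c \<le> K x (f x)"
  shows "c ^ length fs \<le> kernel_pow K (length fs) x (foldl (\<lambda>x f. f x) x fs)"
  using assms(2)
proof (induction fs arbitrary: x)
  case (Cons f fs)
  let ?y = "foldl (\<lambda>x f. f x) (f x) fs"
  have "c \<le> K x (f x)" using Cons.prems by simp
  moreover have "c ^ length fs \<le> kernel_pow K (length fs) (f x) ?y"
    using Cons.IH Cons.prems by simp
  ultimately have "c ^ length (f # fs) \<le> K x (f x) * kernel_pow K (length fs) (f x) ?y"
    using assms(1) by (simp add: mult_mono nonneg)
  also have "\<dots> \<le> (\<Sum>z\<in>UNIV. K x z * kernel_pow K (length fs) z ?y)"
    by (rule member_le_sum[of _ UNIV "\<lambda>z. K x z * kernel_pow K (length fs) z ?y", simplified])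
      (simp add: nonneg kernel_pow_nonneg)
  finally show ?case by (simp add: kernel_pow_Suc_left del: kernel_pow.simps)
qed simp

lemma invariant_vector_exists: "\<exists>v. (\<exists>y. v y \<noteq> 0) \<and> (\<forall>y. v y = (\<Sum>x\<in>UNIV. v x * K x y))"
proof -
  define f :: "real ^ 's \<Rightarrow> real ^ 's" where "f v = (\<chi> y. (\<Sum>x\<in>UNIV. v $ x * K x y) - v $ y)" for v
  have lin: "linear f"
    by (rule linearI) (auto simp: f_def vec_eq_iff sum.distrib sum_distrib_left algebra_simps)
  have mass_0: "(\<Sum>y\<in>UNIV. f v $ y) = 0" for v
  proof -
    have "(\<Sum>y\<in>UNIV. \<Sum>x\<in>UNIV. v $ x * K x y) = (\<Sum>x\<in>UNIV. v $ x * (\<Sum>y\<in>UNIV. K x y))"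
      by (subst sum.swap) (simp add: sum_distrib_left)
    then show ?thesis by (simp add: f_def sum_subtractf row_sum)
  qed
  have "\<not> surj f"
  proof
    assume "surj f"
    then obtain v where "f v = (\<chi> y. if y = undefined then 1 else 0)" by (metis surjD)
    then have "(\<Sum>y\<in>UNIV. f v $ y) = 1" by simp
    with mass_0 show False by simp
  qed
  then have "\<not> inj f" using linear_injective_imp_surjective[OF lin] by blast
  then obtain v1 v2 where "v1 \<noteq> v2" "f v1 = f v2" unfolding inj_def by blast
  define v where "v y = (v1 - v2) $ y" for y
  have "\<exists>y. v y \<noteq> 0" using \<open>v1 \<noteq> v2\<close> by (auto simp: v_def vec_eq_iff)
  moreover have "f (v1 - v2) = 0" using \<open>f v1 = f v2\<close> linear_diff[OF lin] by simp
  then have "v y = (\<Sum>x\<in>UNIV. v x * K x y)" for y by (auto simp: v_def f_def vec_eq_iff)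
  ultimately show ?thesis by blast
qed

text \<open>The absolute values of an invariant signed vector are subinvariant with the same total mass,
  hence invariant.\<close>

lemma invariant_abs:
  assumes "\<And>y. v y = (\<Sum>x\<in>UNIV. v x * K x y)"
  shows "\<bar>v y\<bar> = (\<Sum>x\<in>UNIV. \<bar>v x\<bar> * K x y)"
proof -
  have sub: "\<bar>v y\<bar> \<le> (\<Sum>x\<in>UNIV. \<bar>v x\<bar> * K x y)" for y
  proof -
    have "\<bar>v y\<bar> = \<bar>\<Sum>x\<in>UNIV. v x * K x y\<bar>" using assms[of y] by simp
    also have "\<dots> \<le> (\<Sum>x\<in>UNIV. \<bar>v x * K x y\<bar>)" by (rule sum_abs)
    also have "\<dots> = (\<Sum>x\<in>UNIV. \<bar>v x\<bar> * K x y)" by (simp add: abs_mult nonneg)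
    finally show ?thesis .
  qed
  have "(\<Sum>y\<in>UNIV. \<Sum>x\<in>UNIV. \<bar>v x\<bar> * K x y) = (\<Sum>y\<in>UNIV. \<bar>v y\<bar>)"
    by (subst sum.swap) (simp add: sum_distrib_left[symmetric] row_sum)
  then have "(\<Sum>y\<in>UNIV. (\<Sum>x\<in>UNIV. \<bar>v x\<bar> * K x y) - \<bar>v y\<bar>) = 0"
    by (simp add: sum_subtractf)
  then have "\<forall>y\<in>UNIV. (\<Sum>x\<in>UNIV. \<bar>v x\<bar> * K x y) - \<bar>v y\<bar> = 0"
    using sub by (subst sum_nonneg_eq_0_iff[symmetric]) auto
  then show ?thesis by simp
qed

lemma stationary_dist_exists: "\<exists>\<pi>. stationary_dist K \<pi>"
proof -
  obtain v y0 where "v y0 \<noteq> 0" and v_inv: "\<And>y. v y = (\<Sum>x\<in>UNIV. v x * K x y)"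
    using invariant_vector_exists by blast
  define a where "a = (\<Sum>y\<in>UNIV. \<bar>v y\<bar>)"
  have "\<bar>v y0\<bar> \<le> a" unfolding a_def by (rule member_le_sum) auto
  then have "0 < a" using \<open>v y0 \<noteq> 0\<close> by linarith
  have "stationary_dist K (\<lambda>y. \<bar>v y\<bar> / a)"
    unfolding stationary_dist_def
  proof (intro conjI allI)
    show "(\<Sum>x\<in>UNIV. \<bar>v x\<bar> / a) = 1"
      using \<open>0 < a\<close> by (simp add: a_def flip: sum_divide_distrib)
    show "\<bar>v y\<bar> / a = (\<Sum>x\<in>UNIV. \<bar>v x\<bar> / a * K x y)" for y
      by (subst invariant_abs[OF v_inv]) (simp add: sum_divide_distrib[symmetric])
  qed (use \<open>0 < a\<close> in simp)
  then show ?thesis by blast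
qed

lemma invariant_zero_mass_eq_0:
  assumes c: "0 < c" and reach: "\<And>x. c \<le> K x y0"
    and w_inv: "\<And>y. w y = (\<Sum>x\<in>UNIV. w x * K x y)" and w_sum: "(\<Sum>x\<in>UNIV. w x) = 0"
  shows "w x = 0"
proof -
  text \<open>Removing the guaranteed mass \<open>c\<close> at \<open>y0\<close> leaves a kernel of total mass \<open>1 - c\<close> that
    still fixes \<open>w\<close>, because \<open>w\<close> has total mass 0.\<close>
  define Q where "Q x y = K x y - (if y = y0 then c else 0)" for x y
  have Q_nonneg: "0 \<le> Q x y" for x y
    using reach nonneg by (simp add: Q_def)
  have Q_row_sum: "(\<Sum>y\<in>UNIV. Q x y) = 1 - c" for x
    by (simp add: Q_def sum_subtractf row_sum)
  have w_Q: "w y = (\<Sum>x\<in>UNIV. w x * Q x y)" for y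
    using w_inv[of y] w_sum
    by (simp add: Q_def right_diff_distrib sum_subtractf flip: sum_distrib_right)
  have "(\<Sum>y\<in>UNIV. \<bar>w y\<bar>) \<le> (\<Sum>y\<in>UNIV. \<Sum>x\<in>UNIV. \<bar>w x\<bar> * Q x y)"
  proof (rule sum_mono)
    fix y
    have "\<bar>w y\<bar> \<le> (\<Sum>x\<in>UNIV. \<bar>w x * Q x y\<bar>)" by (subst w_Q) (rule sum_abs)
    then show "\<bar>w y\<bar> \<le> (\<Sum>x\<in>UNIV. \<bar>w x\<bar> * Q x y)" by (simp add: abs_mult Q_nonneg)
  qed
  also have "\<dots> = (\<Sum>x\<in>UNIV. \<bar>w x\<bar> * (\<Sum>y\<in>UNIV. Q x y))"
    by (subst sum.swap) (simp add: sum_distrib_left)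
  also have "\<dots> = (1 - c) * (\<Sum>x\<in>UNIV. \<bar>w x\<bar>)"
    by (simp add: Q_row_sum sum_distrib_left mult.commute)
  finally have "c * (\<Sum>x\<in>UNIV. \<bar>w x\<bar>) \<le> 0"
    by (simp add: algebra_simps)
  then have "(\<Sum>x\<in>UNIV. \<bar>w x\<bar>) = 0"
    using c by (simp add: mult_le_0_iff order.antisym sum_nonneg)
  then show ?thesis by (subst (asm) sum_nonneg_eq_0_iff) auto
qed

lemma stationary_dist_unique:
  assumes "0 < c" and "\<And>x. c \<le> kernel_pow K m x y0"
    and \<pi>1: "stationary_dist K \<pi>1" and \<pi>2: "stationary_dist K \<pi>2"
  shows "\<pi>1 = \<pi>2"
proof -
  define w where "w x = \<pi>1 x - \<pi>2 x" for x
  have \<pi>_inv: "\<pi>1 y = (\<Sum>x\<in>UNIV. \<pi>1 x * K x y)" "\<pi>2 y = (\<Sum>x\<in>UNIV. \<pi>2 x * K x y)" for y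
    using \<pi>1 \<pi>2 unfolding stationary_dist_def by blast+
  have "w y = (\<Sum>x\<in>UNIV. w x * K x y)" for y
  proof -
    have "(\<Sum>x\<in>UNIV. w x * K x y) = (\<Sum>x\<in>UNIV. \<pi>1 x * K x y) - (\<Sum>x\<in>UNIV. \<pi>2 x * K x y)"
      unfolding w_def by (simp add: left_diff_distrib sum_subtractf)
    then show ?thesis using \<pi>_inv[of y] unfolding w_def by linarith
  qed
  then have "w y = (\<Sum>x\<in>UNIV. w x * kernel_pow K m x y)" for y
    by (rule invariant_kernel_pow)
  moreover have "(\<Sum>x\<in>UNIV. \<pi>1 x) = 1" "(\<Sum>x\<in>UNIV. \<pi>2 x) = 1"
    using \<pi>1 \<pi>2 unfolding stationary_dist_def by blast+
  then have "(\<Sum>x\<in>UNIV. w x) = 0"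
    by (simp add: w_def sum_subtractf)
  ultimately have "w x = 0" for x
    using stochastic_matrix.invariant_zero_mass_eq_0[OF stochastic_matrix_kernel_pow assms(1,2)] by blast
  then show ?thesis by (simp add: w_def fun_eq_iff)
qed

lemma absorbing_row:
  assumes "K a a = 1"
  shows "K a y = (if y = a then 1 else 0)"
proof -
  have "(\<Sum>y\<in>UNIV - {a}. K a y) = 0"
    using row_sum[of a] assms by (simp add: sum_diff1)
  then have "\<forall>y\<in>UNIV - {a}. K a y = 0"
    by (simp add: sum_nonneg_eq_0_iff nonneg)
  then show ?thesis using assms by auto
qed

lemma kernel_pow_absorbing_row:
  assumes "K a a = 1"
  shows "kernel_pow K t a y = (if y = a then 1 else 0)"
proof (induction t arbitrary: y)
  case (Suc t)
  have "kernel_pow K (Suc t) a y = (\<Sum>z\<in>UNIV. (if z = a then 1 else 0) * K z y)"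
    by (simp add: Suc)
  also have "\<dots> = (\<Sum>z\<in>UNIV. if z = a then K z y else 0)"
    by (intro sum.cong) auto
  finally show ?case by (simp add: absorbing_row[OF assms])
qed simp

lemma kernel_pow_absorbing_mono:
  assumes "K a a = 1"
  shows "kernel_pow K t x a \<le> kernel_pow K (Suc t) x a"
  using member_le_sum[of a UNIV "\<lambda>z. kernel_pow K t x z * K z a"] assms
  by (simp add: mult_nonneg_nonneg kernel_pow_nonneg nonneg)

lemma absorption_prob_LIMSEQ:
  assumes "K a a = 1"
  shows "(\<lambda>t. kernel_pow K t x a) \<longlonglongrightarrow> absorption_prob K x a"
proof -
  have "incseq (\<lambda>t. kernel_pow K t x a)"
    by (rule incseq_SucI) (rule kernel_pow_absorbing_mono[OF assms])
  moreover have "\<forall>t. kernel_pow K t x a \<le> 1" by (simp add: kernel_pow_le_1)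
  ultimately obtain L where "(\<lambda>t. kernel_pow K t x a) \<longlonglongrightarrow> L"
    by (rule incseq_convergent)
  then show ?thesis unfolding absorption_prob_def by (simp add: limI)
qed

lemma kernel_pow_le_absorption_prob:
  assumes "K a a = 1"
  shows "kernel_pow K t x a \<le> absorption_prob K x a"
  using incseq_SucI[of "\<lambda>t. kernel_pow K t x a", OF kernel_pow_absorbing_mono[OF assms]]
    absorption_prob_LIMSEQ[OF assms] by (rule incseq_le)

lemma absorption_prob_nonneg: "K a a = 1 \<Longrightarrow> 0 \<le> absorption_prob K x a"
  using kernel_pow_le_absorption_prob kernel_pow_nonneg order.trans by blast

lemma absorption_prob_harmonic:
  assumes "K a a = 1"
  shows "absorption_prob K x a = (\<Sum>y\<in>UNIV. K x y * absorption_prob K y a)"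
proof -
  have "(\<lambda>t. kernel_pow K (Suc t) x a) \<longlonglongrightarrow> absorption_prob K x a"
    using absorption_prob_LIMSEQ[OF assms] by (rule LIMSEQ_Suc)
  moreover have "(\<lambda>t. kernel_pow K (Suc t) x a) \<longlonglongrightarrow> (\<Sum>y\<in>UNIV. K x y * absorption_prob K y a)"
    unfolding kernel_pow_Suc_left by (intro tendsto_intros absorption_prob_LIMSEQ assms)
  ultimately show ?thesis by (rule LIMSEQ_unique)
qed

lemma absorption_prob_absorbing:
  "K b b = 1 \<Longrightarrow> absorption_prob K b a = (if a = b then 1 else 0)"
  unfolding absorption_prob_def kernel_pow_absorbing_row[of b] by simp

end

locale absorbing_chain = stochastic_matrix K for K :: "'s::finite \<Rightarrow> 's \<Rightarrow> real" +
  fixes Abs :: "'s set" and m :: nat and c :: real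
  assumes absorbing: "a \<in> Abs \<Longrightarrow> K a a = 1"
    and reach_pos: "0 < c"
    and reach: "\<exists>a\<in>Abs. c \<le> kernel_pow K m x a"
begin

lemma reach_le_1: "c \<le> 1"
  using reach[of undefined] kernel_pow_le_1 order.trans by blast

lemma transient_mass_step:
  "(\<Sum>y\<in>-Abs. kernel_pow K (t + m) x y) \<le> (1 - c) * (\<Sum>y\<in>-Abs. kernel_pow K t x y)"
proof -
  have from_Abs: "(\<Sum>y\<in>-Abs. kernel_pow K m z y) = 0" if "z \<in> Abs" for z
    using kernel_pow_absorbing_row[OF absorbing[OF that]] that by (intro sum.neutral) auto
  have from_transient: "(\<Sum>y\<in>-Abs. kernel_pow K m z y) \<le> 1 - c" for z
  proof -
    obtain a where "a \<in> Abs" "c \<le> kernel_pow K m z a" using reach by blast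
    moreover have "(\<Sum>y\<in>insert a (-Abs). kernel_pow K m z y) \<le> 1"
      by (rule kernel_pow_sum_le_1)
    ultimately show ?thesis by simp
  qed
  have "(\<Sum>y\<in>-Abs. kernel_pow K (t + m) x y) = (\<Sum>z\<in>UNIV. kernel_pow K t x z * (\<Sum>y\<in>-Abs. kernel_pow K m z y))"
    unfolding kernel_pow_add by (subst sum.swap) (simp add: sum_distrib_left)
  also have "\<dots> = (\<Sum>z\<in>-Abs. kernel_pow K t x z * (\<Sum>y\<in>-Abs. kernel_pow K m z y))"
    using from_Abs by (intro sum.mono_neutral_right) auto
  also have "\<dots> \<le> (\<Sum>z\<in>-Abs. kernel_pow K t x z * (1 - c))"
    by (intro sum_mono mult_left_mono from_transient kernel_pow_nonneg)
  also have "\<dots> = (1 - c) * (\<Sum>z\<in>-Abs. kernel_pow K t x z)"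
    by (simp add: sum_distrib_left mult.commute)
  finally show ?thesis .
qed

lemma transient_mass_le: "(\<Sum>y\<in>-Abs. kernel_pow K (j * m) x y) \<le> (1 - c) ^ j"
proof (induction j arbitrary: x)
  case 0
  show ?case using kernel_pow_sum_le_1[where A="-Abs" and t=0 and x=x] by simp
next
  case (Suc j)
  have "(\<Sum>y\<in>-Abs. kernel_pow K (j * m + m) x y) \<le> (1 - c) * (\<Sum>y\<in>-Abs. kernel_pow K (j * m) x y)"
    by (rule transient_mass_step)
  also have "\<dots> \<le> (1 - c) * (1 - c) ^ j"
    using Suc reach_le_1 by (intro mult_left_mono) auto
  finally show ?case by (simp add: add.commute)
qed

lemma transient_mass_small:
  assumes "0 < e"
  shows "\<exists>t. \<forall>x. (\<Sum>y\<in>-Abs. kernel_pow K t x y) < e"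
proof -
  obtain j where "(1 - c) ^ j < e" using real_arch_pow_inv[OF assms, of "1 - c"] reach_pos by auto
  then show ?thesis using transient_mass_le le_less_trans by blast
qed

lemma absorption_prob_sum: "(\<Sum>a\<in>Abs. absorption_prob K x a) = 1"
proof (rule antisym)
  have "(\<lambda>t. \<Sum>a\<in>Abs. kernel_pow K t x a) \<longlonglongrightarrow> (\<Sum>a\<in>Abs. absorption_prob K x a)"
    by (intro tendsto_sum absorption_prob_LIMSEQ absorbing)
  moreover note kernel_pow_sum_le_1[where A=Abs and x=x]
  ultimately show "(\<Sum>a\<in>Abs. absorption_prob K x a) \<le> 1"
    using LIMSEQ_le_const2 by blast
  have "1 - (1 - c) ^ j \<le> (\<Sum>a\<in>Abs. absorption_prob K x a)" for j
  proof -
    have "(\<Sum>y\<in>UNIV. kernel_pow K (j * m) x y) = (\<Sum>a\<in>Abs. kernel_pow K (j * m) x a) + (\<Sum>y\<in>-Abs. kernel_pow K (j * m) x y)"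
      using sum.union_disjoint[of Abs "-Abs" "kernel_pow K (j * m) x"] by simp
    then have "1 - (1 - c) ^ j \<le> (\<Sum>a\<in>Abs. kernel_pow K (j * m) x a)"
      using transient_mass_le[of j x] by (simp add: kernel_pow_row_sum)
    also have "\<dots> \<le> (\<Sum>a\<in>Abs. absorption_prob K x a)"
      by (intro sum_mono kernel_pow_le_absorption_prob absorbing)
    finally show ?thesis .
  qed
  moreover have "norm (1 - c) < 1" using reach_pos reach_le_1 by simp
  then have "(\<lambda>j. 1 - (1 - c) ^ j) \<longlonglongrightarrow> 1 - 0"
    by (intro tendsto_diff tendsto_const LIMSEQ_power_zero)
  ultimately show "1 \<le> (\<Sum>a\<in>Abs. absorption_prob K x a)"
    using LIMSEQ_le_const2 by force
qed

lemma stationary_transient_mass_tendsto_0: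
  fixes Ku :: "'b \<Rightarrow> 's \<Rightarrow> 's \<Rightarrow> real"
  assumes Ku: "\<And>x y. ((\<lambda>u. Ku u x y) \<longlongrightarrow> K x y) F"
    and \<pi>: "eventually (\<lambda>u. stationary_dist (Ku u) (\<pi> u)) F"
  shows "((\<lambda>u. \<Sum>y\<in>-Abs. \<pi> u y) \<longlongrightarrow> 0) F"
proof (rule tendstoI)
  fix e :: real assume "0 < e"
  then obtain d where "0 < d" "d < e" using dense by blast
  then obtain t where t: "\<forall>x. (\<Sum>y\<in>-Abs. kernel_pow K t x y) < d"
    using transient_mass_small by blast
  have "eventually (\<lambda>u. (\<Sum>y\<in>-Abs. kernel_pow (Ku u) t x y) < d) F" for x
  proof (rule order_tendstoD(2))
    show "((\<lambda>u. \<Sum>y\<in>-Abs. kernel_pow (Ku u) t x y) \<longlongrightarrow> (\<Sum>y\<in>-Abs. kernel_pow K t x y)) F"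
      by (intro tendsto_sum kernel_pow_tendsto Ku)
  qed (use t in blast)
  then have "eventually (\<lambda>u. \<forall>x. (\<Sum>y\<in>-Abs. kernel_pow (Ku u) t x y) < d) F"
    by (rule eventually_all_finite)
  then show "eventually (\<lambda>u. dist (\<Sum>y\<in>-Abs. \<pi> u y) 0 < e) F"
    using \<pi>
  proof eventually_elim
    case (elim u)
    have "(\<Sum>y\<in>-Abs. \<pi> u y) \<le> d"
      using elim(1) by (intro stationary_dist_mass_le[OF elim(2), where t=t]) (simp add: less_imp_le)
    moreover have "\<forall>x. 0 \<le> \<pi> u x" using elim(2) unfolding stationary_dist_def by blast
    then have "0 \<le> (\<Sum>y\<in>-Abs. \<pi> u y)" by (simp add: sum_nonneg)
    ultimately show ?case using \<open>d < e\<close> by (simp add: dist_real_def)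
  qed
qed

end

section \<open>The evolutionary Markov chain\<close>

lemma sum_agree_off_dom_prod:
  fixes f :: "'g::finite \<Rightarrow> bool \<Rightarrow> real" and E :: "'g event"
  shows "(\<Sum>y\<in>UNIV. if \<forall>g. E g = None \<longrightarrow> (g \<in> y \<longleftrightarrow> g \<in> x)
            then \<Prod>g\<in>dom E. f g (g \<in> y) else 0) = (\<Prod>g\<in>dom E. f g True + f g False)"
proof -
  define D where "D = dom E"
  have "(\<forall>g. E g = None \<longrightarrow> (g \<in> y \<longleftrightarrow> g \<in> x)) \<longleftrightarrow> y - D = x - D" for y
    unfolding D_def by auto
  then have "(\<Sum>y\<in>UNIV. if \<forall>g. E g = None \<longrightarrow> (g \<in> y \<longleftrightarrow> g \<in> x)
            then \<Prod>g\<in>D. f g (g \<in> y) else 0) = (\<Sum>y\<in>{y. y - D = x - D}. \<Prod>g\<in>D. f g (g \<in> y))"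
    by (simp add: sum.If_cases Int_def)
  also have "\<dots> = (\<Sum>X\<in>Pow D. (\<Prod>g\<in>X. f g True) * (\<Prod>g\<in>D - X. f g False))"
  proof (rule sum.reindex_bij_witness[where i="\<lambda>X. X \<union> (x - D)" and j="\<lambda>y. y \<inter> D"])
    fix y
    have "(\<Prod>g\<in>D. f g (g \<in> y)) = (\<Prod>g\<in>D \<inter> y. f g (g \<in> y)) * (\<Prod>g\<in>D - y. f g (g \<in> y))"
      by (metis Int_Diff_Un Int_Diff_disjoint finite prod.union_disjoint)
    also have "\<dots> = (\<Prod>g\<in>y \<inter> D. f g True) * (\<Prod>g\<in>D - y \<inter> D. f g False)"
      by (auto intro!: arg_cong2[where f="(*)"] prod.cong simp: Int_commute)
    finally show "(\<Prod>g\<in>y \<inter> D. f g True) * (\<Prod>g\<in>D - y \<inter> D. f g False) = (\<Prod>g\<in>D. f g (g \<in> y))"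
      by simp
  qed auto
  also have "\<dots> = (\<Prod>g\<in>D. f g True + f g False)"
    by (rule prod_add[symmetric]) simp
  finally show ?thesis unfolding D_def .
qed

lemma site_prob_0 [simp]: "site_prob 0 \<nu> a b = (if b = a then 1 else 0)"
  by (simp add: site_prob_def)

lemma site_prob_mutation: "b \<noteq> a \<Longrightarrow> site_prob u \<nu> a b = u * (if b then \<nu> else 1 - \<nu>)"
  by (simp add: site_prob_def)

lemma site_prob_True_False: "site_prob u \<nu> a True + site_prob u \<nu> a False = 1"
  by (simp add: site_prob_def algebra_simps)

context
  fixes u \<nu> :: real
  assumes u: "0 \<le> u" "u \<le> 1" and \<nu>: "0 \<le> \<nu>" "\<nu> \<le> 1"
begin

lemma site_prob_nonneg: "0 \<le> site_prob u \<nu> a b"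
  using u \<nu> by (simp add: site_prob_def)

lemma site_prob_le_1: "site_prob u \<nu> a b \<le> 1"
  using site_prob_True_False[of u \<nu> a] site_prob_nonneg[of a "\<not> b"] by (cases b) auto

lemma site_prob_diff_le: "\<bar>site_prob u \<nu> a b - site_prob 0 \<nu> a b\<bar> \<le> u"
  using u \<nu> mult_left_le_one_le[of u \<nu>] by (auto simp: site_prob_def abs_if algebra_simps)

end

locale replacement_chain =
  fixes p :: "'g::finite state \<Rightarrow> 'g event \<Rightarrow> real" and \<nu> :: real
  assumes replacement_rule: "replacement_rule p" and \<nu>_pos: "0 < \<nu>" and \<nu>_less_1: "\<nu> < 1"
begin

abbreviation P :: "real \<Rightarrow> 'g state \<Rightarrow> 'g state \<Rightarrow> real" where
  "P u \<equiv> trans_prob p u \<nu>"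

lemma p_nonneg: "0 \<le> p x E"
  and p_sum: "(\<Sum>E\<in>UNIV. p x E) = 1"
  using replacement_rule unfolding replacement_rule_def by auto

lemma trans_prob_row_sum: "(\<Sum>y\<in>UNIV. P u x y) = 1"
proof -
  have "(\<Sum>y\<in>UNIV. P u x y) = (\<Sum>E\<in>UNIV. p x E * (\<Sum>y\<in>UNIV. if \<forall>g. E g = None \<longrightarrow> (g \<in> y \<longleftrightarrow> g \<in> x)
      then \<Prod>g\<in>dom E. site_prob u \<nu> (the (E g) \<in> x) (g \<in> y) else 0))"
    unfolding trans_prob_def by (subst sum.swap) (simp add: sum_distrib_left)
  also have "\<dots> = 1"
    by (subst sum_agree_off_dom_prod[where f="\<lambda>g b. site_prob u \<nu> (the (E g) \<in> x) b" for E])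
      (simp add: site_prob_True_False p_sum)
  finally show ?thesis .
qed

lemma trans_prob_stochastic:
  assumes "0 \<le> u" "u \<le> 1"
  shows "stochastic_matrix (P u)"
proof
  show "0 \<le> P u x y" for x y
    unfolding trans_prob_def using assms \<nu>_pos \<nu>_less_1
    by (intro sum_nonneg mult_nonneg_nonneg p_nonneg) (auto intro!: prod_nonneg site_prob_nonneg)
qed (rule trans_prob_row_sum)

lemma trans_pow_eq_kernel_pow: "trans_pow p u \<nu> t = kernel_pow (P u) t"
  by (induction t) (simp_all add: fun_eq_iff)

lemma stationary_iff_stationary_dist: "stationary p u \<nu> = stationary_dist (P u)"
  by (simp add: fun_eq_iff stationary_def stationary_dist_def)

lemma absorb_eq_absorption_prob: "absorb p \<nu> x a = absorption_prob (P 0) x a"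
  by (simp add: absorb_def absorption_prob_def trans_pow_eq_kernel_pow)

lemma trans_prob_ge_event:
  assumes "0 \<le> u" "u \<le> 1" "\<forall>g. E g = None \<longrightarrow> (g \<in> y \<longleftrightarrow> g \<in> x)"
  shows "p x E * (\<Prod>g\<in>dom E. site_prob u \<nu> (the (E g) \<in> x) (g \<in> y)) \<le> P u x y"
  unfolding trans_prob_def using assms \<nu>_pos \<nu>_less_1
  by (intro member_le_sum[of E UNIV, simplified, THEN order.trans[rotated]])
     (auto intro!: mult_nonneg_nonneg prod_nonneg p_nonneg site_prob_nonneg)

lemma trans_prob_diff_le:
  assumes u: "0 \<le> u" "u \<le> 1"
  shows "\<bar>P u x y - P 0 x y\<bar> \<le> real CARD('g) * u"
proof -
  let ?C = "\<lambda>E. \<forall>g. E g = None \<longrightarrow> (g \<in> y \<longleftrightarrow> g \<in> x)"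
  let ?pr = "\<lambda>u E. \<Prod>g\<in>dom E. site_prob u \<nu> (the (E g) \<in> x) (g \<in> y)"
  have pr: "\<bar>?pr u E - ?pr 0 E\<bar> \<le> real CARD('g) * u" for E
  proof -
    have "\<bar>?pr u E - ?pr 0 E\<bar> \<le> (\<Sum>g\<in>dom E. \<bar>site_prob u \<nu> (the (E g) \<in> x) (g \<in> y) - site_prob 0 \<nu> (the (E g) \<in> x) (g \<in> y)\<bar>)"
      using norm_prod_diff[of "dom E" "\<lambda>g. site_prob u \<nu> (the (E g) \<in> x) (g \<in> y)" "\<lambda>g. site_prob 0 \<nu> (the (E g) \<in> x) (g \<in> y)"]
        site_prob_nonneg[of u \<nu>] site_prob_le_1[of u \<nu>] u \<nu>_pos \<nu>_less_1 by simp
    also have "\<dots> \<le> (\<Sum>g\<in>dom E. u)"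
      using u \<nu>_pos \<nu>_less_1 by (intro sum_mono site_prob_diff_le) auto
    also have "\<dots> \<le> real CARD('g) * u"
      using u by (simp add: card_mono mult_right_mono)
    finally show ?thesis .
  qed
  have "\<bar>P u x y - P 0 x y\<bar> \<le> (\<Sum>E\<in>UNIV. \<bar>p x E * (if ?C E then ?pr u E else 0) - p x E * (if ?C E then ?pr 0 E else 0)\<bar>)"
    unfolding trans_prob_def sum_subtractf[symmetric] by (rule sum_abs)
  also have "\<dots> \<le> (\<Sum>E\<in>UNIV. p x E * (real CARD('g) * u))"
    using pr p_nonneg u
    by (intro sum_mono) (auto simp: abs_mult right_diff_distrib[symmetric] intro: mult_left_mono)
  also have "\<dots> = real CARD('g) * u"
    by (simp add: p_sum flip: sum_distrib_right)
  finally show ?thesis .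
qed

lemma trans_prob_tendsto_0: "((\<lambda>u. P u x y) \<longlongrightarrow> P 0 x y) (at_right 0)"
proof (rule tendsto_sandwich[where f="\<lambda>u. P 0 x y - real CARD('g) * u" and h="\<lambda>u. P 0 x y + real CARD('g) * u"])
  from eventually_at_right_0_le_1 have "eventually (\<lambda>u. \<bar>P u x y - P 0 x y\<bar> \<le> real CARD('g) * u) (at_right 0)"
    by eventually_elim (auto intro: trans_prob_diff_le)
  then show "eventually (\<lambda>u. P 0 x y - real CARD('g) * u \<le> P u x y) (at_right 0)"
    and "eventually (\<lambda>u. P u x y \<le> P 0 x y + real CARD('g) * u) (at_right 0)"
    by (auto elim!: eventually_mono simp: abs_le_iff)
qed (auto intro!: tendsto_eq_intros)

lemma trans_prob_0_monomorphic:
  assumes "z = {} \<or> z = UNIV"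
  shows "P 0 z z = 1"
proof -
  have "P 0 z z = (\<Sum>E\<in>UNIV. p z E)"
    unfolding trans_prob_def using assms by (intro sum.cong refl) (auto intro!: prod.neutral)
  then show ?thesis by (simp add: p_sum)
qed

lemma d_site_eq: "d_site p x g = (\<Sum>E | g \<in> dom E. p x E)"
proof -
  have "d_site p x g = (\<Sum>E\<in>UNIV. \<Sum>h\<in>UNIV. if E g = Some h then p x E else 0)"
    unfolding d_site_def e_rate_def by (subst sum.swap) (simp add: sum.If_cases Int_def)
  also have "\<dots> = (\<Sum>E\<in>UNIV. if g \<in> dom E then p x E else 0)"
    by (intro sum.cong refl) (auto simp: domIff)
  finally show ?thesis by (simp add: sum.If_cases)
qed

lemma d_site_ge: "g \<in> dom E \<Longrightarrow> p x E \<le> d_site p x g"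
  unfolding d_site_eq by (rule member_le_sum) (simp_all add: p_nonneg)

lemma b_total_eq: "b_total p x = (\<Sum>g\<in>UNIV. d_site p x g)"
  unfolding b_total_def b_site_def d_site_def by (rule sum.swap)

lemma d_site_nonneg: "0 \<le> d_site p x g"
  unfolding d_site_eq by (rule sum_nonneg) (rule p_nonneg)

end

section \<open>Consequences of the fixation axiom\<close>

definition event_step :: "'g event \<Rightarrow> 'g state \<Rightarrow> 'g state" where
  "event_step E x = {h. ext_map E h \<in> x}"

lemma fold_event_step:
  "foldl (\<lambda>x f. f x) x (map event_step Es) = {h. foldr (\<lambda>E f. ext_map E \<circ> f) Es id h \<in> x}"
  by (induction Es arbitrary: x) (simp_all add: event_step_def)

lemma fold_remove_dom: "foldl (\<lambda>x f. f x) x (map (\<lambda>E x. x - dom E) Es) = x - (\<Union>E\<in>set Es. dom E)"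
  by (induction Es arbitrary: x) auto

lemma foldr_ext_map_outside:
  "\<forall>E\<in>set Es. h \<notin> dom E \<Longrightarrow> foldr (\<lambda>E f. ext_map E \<circ> f) Es id h = h"
  by (induction Es) (auto simp: ext_map_def domIff)

context replacement_chain
begin

lemma trans_prob_0_event_step: "p x E \<le> P 0 x (event_step E x)"
proof -
  have "(\<Prod>g\<in>dom E. site_prob 0 \<nu> (the (E g) \<in> x) (g \<in> event_step E x)) = 1"
    by (intro prod.neutral) (auto simp: event_step_def ext_map_def)
  moreover have "p x E * (\<Prod>g\<in>dom E. site_prob 0 \<nu> (the (E g) \<in> x) (g \<in> event_step E x)) \<le> P 0 x (event_step E x)"
    by (rule trans_prob_ge_event) (auto simp: event_step_def ext_map_def)
  ultimately show ?thesis by simp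
qed

lemma trans_prob_remove_dom:
  assumes "0 \<le> u" "u \<le> 1"
  shows "p x E * (u * (1 - \<nu>)) ^ CARD('g) \<le> P u x (x - dom E)"
proof -
  have c: "0 \<le> u * (1 - \<nu>)" "u * (1 - \<nu>) \<le> 1"
    using assms \<nu>_pos \<nu>_less_1 by (auto intro: mult_le_one)
  have "(u * (1 - \<nu>)) ^ CARD('g) \<le> (\<Prod>g\<in>dom E. u * (1 - \<nu>))"
    using c by (simp add: power_decreasing card_mono)
  also have "\<dots> \<le> (\<Prod>g\<in>dom E. site_prob u \<nu> (the (E g) \<in> x) (g \<in> x - dom E))"
    using c assms by (intro prod_mono) (auto simp: site_prob_def)
  finally have "p x E * (u * (1 - \<nu>)) ^ CARD('g) \<le> p x E * (\<Prod>g\<in>dom E. site_prob u \<nu> (the (E g) \<in> x) (g \<in> x - dom E))"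
    by (intro mult_left_mono p_nonneg)
  also have "\<dots> \<le> P u x (x - dom E)"
    using assms by (intro trans_prob_ge_event) auto
  finally show ?thesis .
qed

end

locale fixation_chain = replacement_chain p \<nu>
  for p :: "'g::finite state \<Rightarrow> 'g event \<Rightarrow> real" and \<nu> +
  assumes fixation_axiom: "fixation_axiom p"
begin

lemma fixation_events:
  obtains \<delta> Es g where "0 < \<delta>" "\<forall>E\<in>set Es. \<forall>x. \<delta> \<le> p x E"
    "\<forall>h. foldr (\<lambda>E f. ext_map E \<circ> f) Es id h = g" "g \<in> (\<Union>E\<in>set Es. dom E)"
proof -
  obtain g Es where "Es \<noteq> []" and pos: "\<forall>k<length Es. \<forall>x. 0 < p x (Es ! k)"
    and g: "\<exists>k<length Es. g \<in> dom (Es ! k)" and comp: "\<forall>h. foldr (\<lambda>E f. ext_map E \<circ> f) Es id h = g"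
    using fixation_axiom unfolding fixation_axiom_def by blast
  define S where "S = (\<lambda>(x, E). p x E) ` (UNIV \<times> set Es)"
  have S: "finite S" "S \<noteq> {}" using \<open>Es \<noteq> []\<close> by (auto simp: S_def)
  have "0 < Min S"
    using S pos by (auto simp: S_def in_set_conv_nth)
  moreover have "\<forall>E\<in>set Es. \<forall>x. Min S \<le> p x E"
    using S by (auto simp: S_def intro!: Min_le)
  moreover have "g \<in> (\<Union>E\<in>set Es. dom E)"
    using g nth_mem by blast
  ultimately show ?thesis using that comp by blast
qed

lemma reach_monomorphic_0:
  obtains c m g where "0 < c" "\<forall>x. c \<le> kernel_pow (P 0) m x (if g \<in> x then UNIV else {})"
    "\<forall>x. 0 < d_site p x g"
proof -
  obtain \<delta> Es g where \<delta>: "0 < \<delta>" "\<forall>E\<in>set Es. \<forall>x. \<delta> \<le> p x E"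
    and comp: "\<forall>h. foldr (\<lambda>E f. ext_map E \<circ> f) Es id h = g" and g: "g \<in> (\<Union>E\<in>set Es. dom E)"
    by (rule fixation_events)
  have "\<delta> ^ length Es \<le> kernel_pow (P 0) (length Es) x (if g \<in> x then UNIV else {})" for x
  proof -
    have "\<delta> \<le> P 0 y (f y)" if f: "f \<in> set (map event_step Es)" for f y
    proof -
      obtain E where "E \<in> set Es" "f = event_step E" using f by auto
      then show ?thesis using \<delta>(2) order.trans[OF _ trans_prob_0_event_step[of y E]] by blast
    qed
    then have "\<delta> ^ length Es \<le> kernel_pow (P 0) (length Es) x (foldl (\<lambda>x f. f x) x (map event_step Es))"
      using stochastic_matrix.kernel_pow_ge_path[OF trans_prob_stochastic, of 0 \<delta> "map event_step Es"] \<delta>(1)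
      by simp
    also have "foldl (\<lambda>x f. f x) x (map event_step Es) = (if g \<in> x then UNIV else {})"
      unfolding fold_event_step using comp by auto
    finally show ?thesis .
  qed
  moreover have "0 < d_site p x g" for x
  proof -
    obtain E where "E \<in> set Es" "g \<in> dom E" using g by blast
    then have "\<delta> \<le> p x E" using \<delta>(2) by blast
    also have "\<dots> \<le> d_site p x g" using \<open>g \<in> dom E\<close> by (rule d_site_ge)
    finally show ?thesis using \<delta>(1) by simp
  qed
  ultimately show ?thesis using \<delta>(1) by (intro that[of "\<delta> ^ length Es" "length Es" g]) simp_all
qed

lemma reach_all_a:
  assumes "0 < u" "u \<le> 1"
  obtains c m where "0 < c" "\<forall>x. c \<le> kernel_pow (P u) m x {}"
proof -
  obtain \<delta> Es g where \<delta>: "0 < \<delta>" "\<forall>E\<in>set Es. \<forall>x. \<delta> \<le> p x E"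
    and comp: "\<forall>h. foldr (\<lambda>E f. ext_map E \<circ> f) Es id h = g" and g: "g \<in> (\<Union>E\<in>set Es. dom E)"
    by (rule fixation_events)
  text \<open>Every site is replaced by some event of the fixation sequence: a site untouched by all
    of them would be mapped to itself rather than to \<open>g\<close>.\<close>
  have cover: "(\<Union>E\<in>set Es. dom E) = UNIV"
  proof (rule ccontr)
    assume "(\<Union>E\<in>set Es. dom E) \<noteq> UNIV"
    then obtain h where h: "\<forall>E\<in>set Es. h \<notin> dom E" by auto
    then have "h = g" using foldr_ext_map_outside[OF h] comp by simp
    then show False using g h by blast
  qed
  define c where "c = \<delta> * (u * (1 - \<nu>)) ^ CARD('g)"
  have "0 < c" using assms \<delta>(1) \<nu>_less_1 by (simp add: c_def)
  have "c \<le> P u y (f y)" if f: "f \<in> set (map (\<lambda>E x. x - dom E) Es)" for f y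
  proof -
    obtain E where "E \<in> set Es" "f = (\<lambda>x. x - dom E)" using f by auto
    moreover from this have "c \<le> p y E * (u * (1 - \<nu>)) ^ CARD('g)"
      unfolding c_def using \<delta>(2) assms \<nu>_less_1 by (intro mult_right_mono) auto
    ultimately show ?thesis using trans_prob_remove_dom[of u y E] assms by simp
  qed
  then have "c ^ length Es \<le> kernel_pow (P u) (length Es) x (foldl (\<lambda>x f. f x) x (map (\<lambda>E x. x - dom E) Es))" for x
    using stochastic_matrix.kernel_pow_ge_path[OF trans_prob_stochastic, of u c "map (\<lambda>E x. x - dom E) Es"]
      assms \<open>0 < c\<close> by simp
  then show ?thesis
    using that[of "c ^ length Es" "length Es"] \<open>0 < c\<close> by (simp add: fold_remove_dom cover)
qed

lemma pi_MSS_stationary: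
  assumes "0 < u" "u \<le> 1"
  shows "stationary_dist (P u) (pi_MSS p u \<nu>)"
proof -
  interpret stochastic_matrix "P u" using assms by (intro trans_prob_stochastic) auto
  obtain c m where "0 < c" "\<forall>x. c \<le> kernel_pow (P u) m x {}" by (rule reach_all_a[OF assms])
  then have "\<exists>!\<pi>. stationary_dist (P u) \<pi>"
    using stationary_dist_exists stationary_dist_unique by blast
  then show ?thesis unfolding pi_MSS_def stationary_iff_stationary_dist by (rule theI')
qed

lemma monomorphic_absorbing_chain: "\<exists>m c. absorbing_chain (P 0) {{}, UNIV} m c"
proof -
  obtain c m g where "0 < c" and reach: "\<forall>x. c \<le> kernel_pow (P 0) m x (if g \<in> x then UNIV else {})"
    and "\<forall>x. 0 < d_site p x g"
    by (rule reach_monomorphic_0)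
  have "absorbing_chain_axioms (P 0) {{}, UNIV} m c"
  proof
    show "a \<in> {{}, UNIV} \<Longrightarrow> P 0 a a = 1" for a
      by (auto intro: trans_prob_0_monomorphic)
    show "\<exists>a\<in>{{}, UNIV}. c \<le> kernel_pow (P 0) m x a" for x
      using reach[rule_format, of x] by (cases "g \<in> x") auto
  qed (rule \<open>0 < c\<close>)
  then show ?thesis
    using trans_prob_stochastic[of 0] unfolding absorbing_chain_def by auto
qed

lemma b_total_pos: "0 < b_total p x"
proof -
  obtain g where "0 < d_site p x g" using reach_monomorphic_0 by metis
  also have "d_site p x g \<le> b_total p x"
    unfolding b_total_eq by (rule member_le_sum) (auto intro: d_site_nonneg)
  finally show ?thesis .
qed

lemma absorb_a_add_absorb_A: "absorb p \<nu> x {} + absorb p \<nu> x UNIV = 1"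
  and absorb_A_from_a: "absorb p \<nu> {} UNIV = 0"
  and absorb_a_from_A: "absorb p \<nu> UNIV {} = 0"
  and absorb_monomorphic_nonneg: "a \<in> {{}, UNIV} \<Longrightarrow> 0 \<le> absorb p \<nu> x a"
  and absorb_A_harmonic: "absorb p \<nu> x UNIV = (\<Sum>y\<in>UNIV. P 0 x y * absorb p \<nu> y UNIV)"
proof -
  obtain m c where "absorbing_chain (P 0) {{}, UNIV} m c"
    using monomorphic_absorbing_chain by blast
  then interpret absorbing_chain "P 0" "{{}, UNIV}" m c .
  show "absorb p \<nu> x {} + absorb p \<nu> x UNIV = 1"
    using absorption_prob_sum[of x] by (simp add: absorb_eq_absorption_prob)
  show "absorb p \<nu> {} UNIV = 0" "absorb p \<nu> UNIV {} = 0"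
    by (simp_all add: absorb_eq_absorption_prob absorption_prob_absorbing absorbing)
  show "a \<in> {{}, UNIV} \<Longrightarrow> 0 \<le> absorb p \<nu> x a"
    by (simp add: absorb_eq_absorption_prob absorption_prob_nonneg absorbing)
  show "absorb p \<nu> x UNIV = (\<Sum>y\<in>UNIV. P 0 x y * absorb p \<nu> y UNIV)"
    by (simp add: absorb_eq_absorption_prob absorption_prob_harmonic[symmetric] absorbing)
qed

lemma rho_A_pos: "0 < rho_A p \<nu>"
proof -
  interpret stochastic_matrix "P 0" by (rule trans_prob_stochastic) auto
  obtain c m g where "0 < c" and reach: "\<forall>x. c \<le> kernel_pow (P 0) m x (if g \<in> x then UNIV else {})"
    and d_pos: "\<forall>x. 0 < d_site p x g"
    by (rule reach_monomorphic_0)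
  have "c \<le> absorb p \<nu> {g} UNIV"
    using reach[rule_format, of "{g}"] kernel_pow_le_absorption_prob[of UNIV m "{g}"]
    by (simp add: absorb_eq_absorption_prob trans_prob_0_monomorphic)
  then have "0 < d_site p {} g / b_total p {} * absorb p \<nu> {g} UNIV"
    using \<open>0 < c\<close> d_pos b_total_pos by simp
  also have "\<dots> \<le> rho_A p \<nu>"
    unfolding rho_A_def using b_total_pos
    by (intro member_le_sum) (auto intro!: divide_nonneg_pos mult_nonneg_nonneg d_site_nonneg absorb_monomorphic_nonneg)
  finally show ?thesis .
qed

lemma rho_a_nonneg: "0 \<le> rho_a p \<nu>"
  unfolding rho_a_def using b_total_pos
  by (auto intro!: sum_nonneg divide_nonneg_pos mult_nonneg_nonneg d_site_nonneg absorb_monomorphic_nonneg)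

end

section \<open>Rare mutations\<close>

definition flip :: "'g set \<Rightarrow> 'g \<Rightarrow> 'g set" where
  "flip z g = (if g \<in> z then z - {g} else insert g z)"

lemma flip_mem [simp]: "h \<in> flip z g \<longleftrightarrow> (if h = g then h \<notin> z else h \<in> z)"
  by (auto simp: flip_def)

lemma flip_neq [simp]: "flip z g \<noteq> z" "z \<noteq> flip z g"
  by (auto simp: set_eq_iff)

lemma flip_eq_flip_iff: "flip z g = flip z g' \<longleftrightarrow> g = g'"
  by (auto simp: set_eq_iff)

lemma flip_monomorphic [simp]: "flip {} g = {g}" "flip UNIV g = UNIV - {g}"
  by (auto simp: flip_def)

lemma prod_le_two_factors:
  fixes f :: "'a \<Rightarrow> real"
  assumes "finite D" "g1 \<in> D" "g2 \<in> D" "g1 \<noteq> g2" "\<And>h. h \<in> D \<Longrightarrow> 0 \<le> f h \<and> f h \<le> 1"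
  shows "(\<Prod>h\<in>D. f h) \<le> f g1 * f g2"
proof -
  have "(\<Prod>h\<in>D. f h) = f g1 * (f g2 * (\<Prod>h\<in>D - {g1} - {g2}. f h))"
    using assms by (simp add: prod.remove[of D g1] prod.remove[of "D - {g1}" g2])
  also have "\<dots> \<le> f g1 * (f g2 * 1)"
    using assms by (intro mult_left_mono prod_le_1) auto
  finally show ?thesis by simp
qed

context replacement_chain
begin

definition mutant_bias :: "'g state \<Rightarrow> real" where
  "mutant_bias z = (if z = UNIV then 1 - \<nu> else \<nu>)"

lemma trans_prob_flip:
  assumes z: "z = {} \<or> z = UNIV"
  shows "P u z (flip z g) = u * mutant_bias z *
     (\<Sum>E | g \<in> dom E. p z E * (\<Prod>h\<in>dom E - {g}. site_prob u \<nu> (z = UNIV) (z = UNIV)))"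
proof -
  have "P u z (flip z g) = (\<Sum>E\<in>UNIV. if g \<in> dom E
      then u * mutant_bias z * (p z E * (\<Prod>h\<in>dom E - {g}. site_prob u \<nu> (z = UNIV) (z = UNIV))) else 0)"
    unfolding trans_prob_def
  proof (rule sum.cong[OF refl])
    fix E :: "'g event"
    have mem: "a \<in> z \<longleftrightarrow> z = UNIV" for a using z by auto
    have compatible: "(\<forall>h. E h = None \<longrightarrow> (h \<in> flip z g \<longleftrightarrow> h \<in> z)) \<longleftrightarrow> g \<in> dom E"
      by (auto simp: domIff)
    show "p z E * (if \<forall>h. E h = None \<longrightarrow> (h \<in> flip z g \<longleftrightarrow> h \<in> z)
        then \<Prod>h\<in>dom E. site_prob u \<nu> (the (E h) \<in> z) (h \<in> flip z g) else 0) =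
      (if g \<in> dom E then u * mutant_bias z * (p z E * (\<Prod>h\<in>dom E - {g}. site_prob u \<nu> (z = UNIV) (z = UNIV))) else 0)"
    proof (cases "g \<in> dom E")
      case True
      have "(\<Prod>h\<in>dom E. site_prob u \<nu> (the (E h) \<in> z) (h \<in> flip z g))
          = site_prob u \<nu> (the (E g) \<in> z) (g \<in> flip z g) *
            (\<Prod>h\<in>dom E - {g}. site_prob u \<nu> (the (E h) \<in> z) (h \<in> flip z g))"
        using True by (simp add: prod.remove)
      also have "(\<Prod>h\<in>dom E - {g}. site_prob u \<nu> (the (E h) \<in> z) (h \<in> flip z g))
          = (\<Prod>h\<in>dom E - {g}. site_prob u \<nu> (z = UNIV) (z = UNIV))"
        by (intro prod.cong refl) (simp add: mem)
      also have "site_prob u \<nu> (the (E g) \<in> z) (g \<in> flip z g) = u * mutant_bias z"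
        by (simp add: mem site_prob_mutation mutant_bias_def)
      finally show ?thesis using True unfolding compatible by simp
    next
      case False
      then show ?thesis unfolding compatible by simp
    qed
  qed
  then show ?thesis by (simp add: sum.If_cases sum_distrib_left)
qed

lemma trans_prob_flip_div_tendsto:
  assumes z: "z = {} \<or> z = UNIV"
  shows "((\<lambda>u. P u z (flip z g) / u) \<longlongrightarrow> mutant_bias z * d_site p z g) (at_right 0)"
proof -
  define F where "F u = mutant_bias z * (\<Sum>E | g \<in> dom E. p z E * (\<Prod>h\<in>dom E - {g}. 1 - u * mutant_bias z))" for u
  have "(F \<longlongrightarrow> mutant_bias z * (\<Sum>E | g \<in> dom E. p z E * (\<Prod>h\<in>dom E - {g}. 1 - 0 * mutant_bias z))) (at_right 0)"
    unfolding F_def by (intro tendsto_intros)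
  then have "(F \<longlongrightarrow> mutant_bias z * d_site p z g) (at_right 0)"
    by (simp add: d_site_eq)
  moreover have "eventually (\<lambda>u. F u = P u z (flip z g) / u) (at_right 0)"
  proof -
    have no_mutation: "site_prob u \<nu> (z = UNIV) (z = UNIV) = 1 - u * mutant_bias z" for u
      by (simp add: site_prob_def mutant_bias_def algebra_simps)
    show ?thesis
      using eventually_at_right_less[of 0]
      by eventually_elim (simp add: no_mutation trans_prob_flip[OF z] F_def)
  qed
  ultimately show ?thesis by (rule Lim_transform_eventually)
qed

lemma trans_prob_two_mutations_le:
  assumes z: "z = {} \<or> z = UNIV" and u: "0 \<le> u" "u \<le> 1" and "g1 \<noteq> g2"
    and g1: "g1 \<in> y \<longleftrightarrow> g1 \<notin> z" and g2: "g2 \<in> y \<longleftrightarrow> g2 \<notin> z"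
  shows "P u z y \<le> u\<^sup>2"
proof -
  let ?f = "\<lambda>E h. site_prob u \<nu> (the (E h) \<in> z) (h \<in> y)"
  have f_bounds: "0 \<le> ?f E h \<and> ?f E h \<le> 1" for E h
    using site_prob_nonneg[OF u] site_prob_le_1[OF u] \<nu>_pos \<nu>_less_1 by simp
  have f_mutation: "?f E h \<le> u" if "h \<in> y \<longleftrightarrow> h \<notin> z" for E h
  proof -
    have "the (E h) \<in> z \<longleftrightarrow> h \<in> z" using z by auto
    then have "?f E h = u * (if h \<in> y then \<nu> else 1 - \<nu>)"
      using that by (simp add: site_prob_mutation)
    also have "\<dots> \<le> u" using u \<nu>_pos \<nu>_less_1 by (simp add: mult_left_le)
    finally show ?thesis .
  qed
  have "P u z y \<le> (\<Sum>E\<in>UNIV. p z E * u\<^sup>2)"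
    unfolding trans_prob_def
  proof (intro sum_mono)
    fix E :: "'g event"
    show "p z E * (if \<forall>g. E g = None \<longrightarrow> (g \<in> y \<longleftrightarrow> g \<in> z) then \<Prod>g\<in>dom E. ?f E g else 0) \<le> p z E * u\<^sup>2"
    proof (cases "\<forall>g. E g = None \<longrightarrow> (g \<in> y \<longleftrightarrow> g \<in> z)")
      case True
      then have "g1 \<in> dom E" "g2 \<in> dom E" using g1 g2 by auto
      then have "(\<Prod>g\<in>dom E. ?f E g) \<le> ?f E g1 * ?f E g2"
        using \<open>g1 \<noteq> g2\<close> f_bounds by (intro prod_le_two_factors) auto
      also have "\<dots> \<le> u\<^sup>2"
        using f_mutation[OF g1] f_mutation[OF g2] f_bounds u
        by (simp add: power2_eq_square mult_mono)
      finally show ?thesis using True p_nonneg by (simp add: mult_left_mono)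
    next
      case False
      then show ?thesis by (simp only: if_False) (simp add: p_nonneg)
    qed
  qed
  also have "\<dots> = u\<^sup>2" by (simp add: p_sum flip: sum_distrib_right)
  finally show ?thesis .
qed

lemma trans_prob_far_div_tendsto:
  assumes z: "z = {} \<or> z = UNIV" and "y \<noteq> z" and far: "\<forall>g. y \<noteq> flip z g"
  shows "((\<lambda>u. P u z y / u) \<longlongrightarrow> 0) (at_right 0)"
proof -
  obtain g1 where g1: "g1 \<in> y \<longleftrightarrow> g1 \<notin> z" using \<open>y \<noteq> z\<close> by blast
  obtain g2 where g2: "g2 \<in> y \<longleftrightarrow> g2 \<notin> z" "g2 \<noteq> g1"
  proof -
    have "y \<noteq> flip z g1" using far by blast
    then show ?thesis using that g1 by (auto simp: set_eq_iff split: if_splits)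
  qed
  from eventually_at_right_0_le_1 have "eventually (\<lambda>u. norm (P u z y / u) \<le> norm u * 1) (at_right 0)"
  proof eventually_elim
    case (elim u)
    then have "P u z y \<le> u\<^sup>2"
      using trans_prob_two_mutations_le[OF z _ _ g2(2)[symmetric] g1 g2(1)] by simp
    moreover have "0 \<le> P u z y"
      using elim stochastic_matrix.nonneg[OF trans_prob_stochastic] by simp
    ultimately show ?case using elim by (simp add: divide_le_eq power2_eq_square)
  qed
  then show ?thesis by (rule tendsto_0_le[OF tendsto_ident_at])
qed

lemma sum_trans_prob_div_tendsto:
  assumes z: "z = {} \<or> z = UNIV" and "f z = 0"
  shows "((\<lambda>u. \<Sum>y\<in>UNIV. P u z y * f y / u) \<longlongrightarrow> mutant_bias z * (\<Sum>g\<in>UNIV. d_site p z g * f (flip z g)))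
    (at_right 0)"
proof -
  define L where "L y = (\<Sum>g\<in>UNIV. if y = flip z g then mutant_bias z * d_site p z g * f y else 0)" for y
  have "((\<lambda>u. P u z y * f y / u) \<longlongrightarrow> L y) (at_right 0)" for y
  proof -
    consider "y = z" | g where "y = flip z g" | "y \<noteq> z" "\<forall>g. y \<noteq> flip z g" by blast
    then show ?thesis
    proof cases
      case 1
      have "L y = 0" unfolding L_def 1 by (intro sum.neutral) simp
      then show ?thesis using 1 \<open>f z = 0\<close> by simp
    next
      case (2 g)
      have "L y = mutant_bias z * d_site p z g * f y"
        unfolding L_def 2 flip_eq_flip_iff by simp
      moreover have "((\<lambda>u. P u z y / u * f y) \<longlongrightarrow> mutant_bias z * d_site p z g * f y) (at_right 0)"
        unfolding 2 by (intro tendsto_intros trans_prob_flip_div_tendsto z)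
      ultimately show ?thesis by simp
    next
      case 3
      have "((\<lambda>u. P u z y / u * f y) \<longlongrightarrow> 0 * f y) (at_right 0)"
        using trans_prob_far_div_tendsto[OF z 3] by (rule tendsto_mult_right)
      moreover have "L y = 0" using 3 by (simp add: L_def)
      ultimately show ?thesis by simp
    qed
  qed
  then have "((\<lambda>u. \<Sum>y\<in>UNIV. P u z y * f y / u) \<longlongrightarrow> (\<Sum>y\<in>UNIV. L y)) (at_right 0)"
    by (intro tendsto_sum)
  also have "(\<Sum>y\<in>UNIV. L y) = mutant_bias z * (\<Sum>g\<in>UNIV. d_site p z g * f (flip z g))"
    unfolding L_def by (subst sum.swap) (simp add: sum_distrib_left mult.assoc)
  finally show ?thesis .
qed
end

lemma sum_monomorphic_split:
  fixes f :: "'g::finite set \<Rightarrow> real"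
  shows "(\<Sum>x\<in>UNIV. f x) = f {} + f UNIV + (\<Sum>x\<in>-{{}, UNIV}. f x)"
  using sum.union_disjoint[of "{{}, UNIV}" "-{{}, UNIV}" f] by simp

context fixation_chain
begin

definition drift :: "real \<Rightarrow> 'g state \<Rightarrow> real" where
  "drift u x = (\<Sum>y\<in>UNIV. (P u x y - P 0 x y) * absorb p \<nu> y UNIV) / u"

lemma pi_MSS_drift:
  assumes "0 < u" "u \<le> 1"
  shows "(\<Sum>x\<in>UNIV. pi_MSS p u \<nu> x * drift u x) = 0"
proof -
  have "\<pi> y = (\<Sum>x\<in>UNIV. \<pi> x * P u x y)" if "stationary_dist (P u) \<pi>" for \<pi> y
    using that unfolding stationary_dist_def by blast
  then have "(\<Sum>x\<in>UNIV. pi_MSS p u \<nu> x * (\<Sum>y\<in>UNIV. (P u x y - P 0 x y) * absorb p \<nu> y UNIV)) = 0"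
    using pi_MSS_stationary[OF assms] absorb_A_harmonic
    by (intro stationary_pairing_harmonic) blast+
  then show ?thesis
    by (simp add: drift_def sum_divide_distrib[symmetric])
qed

lemma drift_bounded:
  assumes "0 < u" "u \<le> 1"
  shows "\<bar>drift u x\<bar> \<le> real CARD('g) * real CARD('g set)"
proof -
  have "\<bar>\<Sum>y\<in>UNIV. (P u x y - P 0 x y) * absorb p \<nu> y UNIV\<bar> \<le> (\<Sum>y\<in>(UNIV::'g set set). real CARD('g) * u)"
  proof (rule order.trans[OF sum_abs sum_mono])
    fix y
    have "0 \<le> absorb p \<nu> y UNIV" "absorb p \<nu> y UNIV \<le> 1"
      using absorb_a_add_absorb_A[of y] absorb_monomorphic_nonneg[of UNIV y] absorb_monomorphic_nonneg[of "{}" y] by auto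
    then have "\<bar>(P u x y - P 0 x y) * absorb p \<nu> y UNIV\<bar> \<le> \<bar>P u x y - P 0 x y\<bar>"
      by (simp add: abs_mult mult_left_le)
    also have "\<dots> \<le> real CARD('g) * u"
      using assms by (intro trans_prob_diff_le) auto
    finally show "\<bar>(P u x y - P 0 x y) * absorb p \<nu> y UNIV\<bar> \<le> real CARD('g) * u" .
  qed
  then show ?thesis
    using assms by (simp add: drift_def abs_div pos_divide_le_eq mult_ac)
qed

lemma drift_a_tendsto:
  "((\<lambda>u. drift u {}) \<longlongrightarrow> \<nu> * (\<Sum>g\<in>UNIV. d_site p {} g * absorb p \<nu> {g} UNIV)) (at_right 0)"
proof -
  have P0: "P 0 {} y = (if y = {} then 1 else 0)" for y
    using stochastic_matrix.absorbing_row[OF trans_prob_stochastic trans_prob_0_monomorphic] by auto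
  have "drift u {} = (\<Sum>y\<in>UNIV. P u {} y * absorb p \<nu> y UNIV / u)" for u
    by (simp add: drift_def left_diff_distrib sum_subtractf P0 absorb_A_from_a
        if_distrib[of "\<lambda>r. r * _"] sum_divide_distrib cong: if_cong)
  then show ?thesis
    using sum_trans_prob_div_tendsto[of "{}" "\<lambda>y. absorb p \<nu> y UNIV"]
    by (simp add: absorb_A_from_a mutant_bias_def)
qed

lemma drift_A_tendsto:
  "((\<lambda>u. drift u UNIV) \<longlongrightarrow> - ((1 - \<nu>) * (\<Sum>g\<in>UNIV. d_site p UNIV g * absorb p \<nu> (UNIV - {g}) {})))
    (at_right 0)"
proof -
  have P0: "P 0 UNIV y = (if y = UNIV then 1 else 0)" for y
    using stochastic_matrix.absorbing_row[OF trans_prob_stochastic trans_prob_0_monomorphic] by auto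
  have fix_A: "absorb p \<nu> y UNIV = 1 - absorb p \<nu> y {}" for y
    using absorb_a_add_absorb_A[of y] by linarith
  have "(\<Sum>y\<in>UNIV. (P u UNIV y - P 0 UNIV y) * absorb p \<nu> y UNIV)
      = - (\<Sum>y\<in>UNIV. P u UNIV y * absorb p \<nu> y {})" for u
  proof -
    have "(\<Sum>y\<in>UNIV. (P u UNIV y - P 0 UNIV y) * absorb p \<nu> y UNIV)
        = (\<Sum>y\<in>UNIV. P u UNIV y) - (\<Sum>y\<in>UNIV. P 0 UNIV y)
          - (\<Sum>y\<in>UNIV. P u UNIV y * absorb p \<nu> y {}) + (\<Sum>y\<in>UNIV. P 0 UNIV y * absorb p \<nu> y {})"
      by (simp add: fix_A algebra_simps sum.distrib sum_subtractf)
    also have "(\<Sum>y\<in>UNIV. P 0 UNIV y * absorb p \<nu> y {}) = 0"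
      by (intro sum.neutral) (simp add: P0 absorb_a_from_A)
    finally show ?thesis by (simp add: trans_prob_row_sum)
  qed
  then have "drift u UNIV = - (\<Sum>y\<in>UNIV. P u UNIV y * absorb p \<nu> y {} / u)" for u
    by (simp add: drift_def sum_divide_distrib)
  then show ?thesis
    using tendsto_minus[OF sum_trans_prob_div_tendsto[of UNIV "\<lambda>y. absorb p \<nu> y {}"]]
    by (simp add: absorb_a_from_A mutant_bias_def)
qed

lemma pi_MSS_bounds:
  assumes "0 < u" "u \<le> 1"
  shows "0 \<le> pi_MSS p u \<nu> x" "pi_MSS p u \<nu> x \<le> 1"
  using pi_MSS_stationary[OF assms] stationary_dist_le_1 unfolding stationary_dist_def by blast+

lemma pi_MSS_transient_tendsto_0:
  "((\<lambda>u. \<Sum>y\<in>-{{}, UNIV}. pi_MSS p u \<nu> y) \<longlongrightarrow> 0) (at_right 0)"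
proof -
  obtain m c where "absorbing_chain (P 0) {{}, UNIV} m c"
    using monomorphic_absorbing_chain by blast
  moreover have "eventually (\<lambda>u. stationary_dist (P u) (pi_MSS p u \<nu>)) (at_right 0)"
    using eventually_at_right_0_le_1 by eventually_elim (simp add: pi_MSS_stationary)
  ultimately show ?thesis
    by (rule absorbing_chain.stationary_transient_mass_tendsto_0[OF _ trans_prob_tendsto_0])
qed

lemma pi_MSS_transient_state_tendsto_0:
  assumes "x \<notin> {{}, UNIV}"
  shows "((\<lambda>u. pi_MSS p u \<nu> x) \<longlongrightarrow> 0) (at_right 0)"
proof (rule tendsto_sandwich[OF _ _ tendsto_const pi_MSS_transient_tendsto_0])
  show "eventually (\<lambda>u. 0 \<le> pi_MSS p u \<nu> x) (at_right 0)"
    using eventually_at_right_0_le_1 by eventually_elim (simp add: pi_MSS_bounds)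
  show "eventually (\<lambda>u. pi_MSS p u \<nu> x \<le> (\<Sum>y\<in>-{{}, UNIV}. pi_MSS p u \<nu> y)) (at_right 0)"
    using eventually_at_right_0_le_1
    by eventually_elim (use assms in \<open>auto intro: member_le_sum pi_MSS_bounds\<close>)
qed

lemma pi_MSS_monomorphic_tendsto_1:
  "((\<lambda>u. pi_MSS p u \<nu> {} + pi_MSS p u \<nu> UNIV) \<longlongrightarrow> 1) (at_right 0)"
proof -
  have "((\<lambda>u. 1 - (\<Sum>y\<in>-{{}, UNIV}. pi_MSS p u \<nu> y)) \<longlongrightarrow> 1 - 0) (at_right 0)"
    by (intro tendsto_diff tendsto_const pi_MSS_transient_tendsto_0)
  moreover have "eventually (\<lambda>u. 1 - (\<Sum>y\<in>-{{}, UNIV}. pi_MSS p u \<nu> y) = pi_MSS p u \<nu> {} + pi_MSS p u \<nu> UNIV)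
      (at_right 0)"
    using eventually_at_right_0_le_1
  proof eventually_elim
    case (elim u)
    then have "(\<Sum>y\<in>UNIV. pi_MSS p u \<nu> y) = 1"
      using pi_MSS_stationary unfolding stationary_dist_def by blast
    then show ?case unfolding sum_monomorphic_split by linarith
  qed
  ultimately show ?thesis by (simp add: Lim_transform_eventually)
qed

lemma pi_MSS_transient_drift_tendsto_0:
  "((\<lambda>u. \<Sum>x\<in>-{{}, UNIV}. pi_MSS p u \<nu> x * drift u x) \<longlongrightarrow> 0) (at_right 0)"
proof -
  define K where "K = real CARD('g) * real CARD('g set)"
  from eventually_at_right_0_le_1
  have "eventually (\<lambda>u. norm (\<Sum>x\<in>-{{}, UNIV}. pi_MSS p u \<nu> x * drift u x)
      \<le> norm (\<Sum>x\<in>-{{}, UNIV}. pi_MSS p u \<nu> x) * K) (at_right 0)"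
  proof eventually_elim
    case (elim u)
    have "\<bar>\<Sum>x\<in>-{{}, UNIV}. pi_MSS p u \<nu> x * drift u x\<bar> \<le> (\<Sum>x\<in>-{{}, UNIV}. pi_MSS p u \<nu> x * K)"
      using elim pi_MSS_bounds drift_bounded
      by (intro order.trans[OF sum_abs sum_mono]) (simp add: abs_mult K_def mult_left_mono)
    also have "\<dots> \<le> norm (\<Sum>x\<in>-{{}, UNIV}. pi_MSS p u \<nu> x) * K"
      by (simp add: K_def flip: sum_distrib_right)
    finally show ?case by simp
  qed
  then show ?thesis by (rule tendsto_0_le[OF pi_MSS_transient_tendsto_0])
qed

lemma pi_MSS_balance:
  "((\<lambda>u. \<nu> * (\<Sum>g\<in>UNIV. d_site p {} g * absorb p \<nu> {g} UNIV) * pi_MSS p u \<nu> {}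
       - (1 - \<nu>) * (\<Sum>g\<in>UNIV. d_site p UNIV g * absorb p \<nu> (UNIV - {g}) {}) * pi_MSS p u \<nu> UNIV)
    \<longlongrightarrow> 0) (at_right 0)"
proof -
  define \<alpha> where "\<alpha> = \<nu> * (\<Sum>g\<in>UNIV. d_site p {} g * absorb p \<nu> {g} UNIV)"
  define \<beta> where "\<beta> = (1 - \<nu>) * (\<Sum>g\<in>UNIV. d_site p UNIV g * absorb p \<nu> (UNIV - {g}) {})"
  define R where "R u = (\<Sum>x\<in>-{{}, UNIV}. pi_MSS p u \<nu> x * drift u x)" for u
  have "(R \<longlongrightarrow> 0) (at_right 0)"
    unfolding R_def by (rule pi_MSS_transient_drift_tendsto_0)
  moreover have "((\<lambda>u. pi_MSS p u \<nu> {} * (drift u {} - \<alpha>)) \<longlongrightarrow> 0) (at_right 0)"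
    and "((\<lambda>u. pi_MSS p u \<nu> UNIV * (drift u UNIV + \<beta>)) \<longlongrightarrow> 0) (at_right 0)"
    using drift_a_tendsto drift_A_tendsto eventually_at_right_0_le_1
    by (auto simp: \<alpha>_def \<beta>_def pi_MSS_bounds abs_le_iff elim!: eventually_mono
        intro!: tendsto_bounded_mult_0[where B=1] LIM_zero tendsto_eq_intros)
  ultimately have "((\<lambda>u. - R u - pi_MSS p u \<nu> {} * (drift u {} - \<alpha>) - pi_MSS p u \<nu> UNIV * (drift u UNIV + \<beta>))
      \<longlongrightarrow> - 0 - 0 - 0) (at_right 0)"
    by (intro tendsto_intros)
  moreover have "eventually (\<lambda>u. - R u - pi_MSS p u \<nu> {} * (drift u {} - \<alpha>) - pi_MSS p u \<nu> UNIV * (drift u UNIV + \<beta>)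
      = \<alpha> * pi_MSS p u \<nu> {} - \<beta> * pi_MSS p u \<nu> UNIV) (at_right 0)"
    using eventually_at_right_0_le_1
  proof eventually_elim
    case (elim u)
    then have "(\<Sum>x\<in>UNIV. pi_MSS p u \<nu> x * drift u x) = 0" by (simp add: pi_MSS_drift)
    then show ?case unfolding sum_monomorphic_split R_def by (simp add: algebra_simps)
  qed
  ultimately show ?thesis unfolding \<alpha>_def \<beta>_def by (simp add: Lim_transform_eventually)
qed
lemma b_total_mult_rho_A: "b_total p {} * rho_A p \<nu> = (\<Sum>g\<in>UNIV. d_site p {} g * absorb p \<nu> {g} UNIV)"
  unfolding rho_A_def sum_distrib_left using b_total_pos[of "{}"] by (intro sum.cong) auto

lemma b_total_mult_rho_a: "b_total p UNIV * rho_a p \<nu> = (\<Sum>g\<in>UNIV. d_site p UNIV g * absorb p \<nu> (UNIV - {g}) {})"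
  unfolding rho_a_def sum_distrib_left using b_total_pos[of UNIV] by (intro sum.cong) auto

end

theorem theorem1:
  fixes p :: "'g::finite state \<Rightarrow> 'g event \<Rightarrow> real" and \<nu> :: real and x :: "'g state"
  assumes "replacement_rule p" and "fixation_axiom p" and "0 < \<nu>" and "\<nu> < 1"
  shows "((\<lambda>u. pi_MSS p u \<nu> x) \<longlongrightarrow>
     (let D = \<nu> * b_total p {} * rho_A p \<nu> + (1 - \<nu>) * b_total p UNIV * rho_a p \<nu>
      in if x = UNIV then \<nu> * b_total p {} * rho_A p \<nu> / D
         else if x = {} then (1 - \<nu>) * b_total p UNIV * rho_a p \<nu> / D
         else 0)) (at_right 0)"
proof -
  interpret fixation_chain p \<nu> using assms by unfold_locales
  define \<alpha> where "\<alpha> = \<nu> * b_total p {} * rho_A p \<nu>"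
  define \<beta> where "\<beta> = (1 - \<nu>) * b_total p UNIV * rho_a p \<nu>"
  have "0 < \<alpha>"
    using \<nu>_pos b_total_pos rho_A_pos by (simp add: \<alpha>_def)
  moreover have "0 \<le> \<beta>"
    using \<nu>_less_1 b_total_pos rho_a_nonneg by (simp add: \<beta>_def less_imp_le)
  ultimately have "\<alpha> + \<beta> \<noteq> 0" by simp
  from tendsto_balance[OF pi_MSS_monomorphic_tendsto_1 _ this] pi_MSS_balance
  have "((\<lambda>u. pi_MSS p u \<nu> {}) \<longlongrightarrow> \<beta> / (\<alpha> + \<beta>)) (at_right 0)"
    and "((\<lambda>u. pi_MSS p u \<nu> UNIV) \<longlongrightarrow> \<alpha> / (\<alpha> + \<beta>)) (at_right 0)"
    by (simp_all add: \<alpha>_def \<beta>_def b_total_mult_rho_A b_total_mult_rho_a mult.assoc)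
  then show ?thesis
    using pi_MSS_transient_state_tendsto_0[of x] unfolding Let_def \<alpha>_def[symmetric] \<beta>_def[symmetric]
    by auto
qed

end
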